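(* Let $f(z)=z+\sum_{n=2}^{\infty}a_nz^n$ belong to the class $\mathcal{S}_u^*$. Then $$|H_{2,2}(f)|=|a_2a_4-a_3^2|\le \frac14,$$ and the estimate is sharp, i.e. there exists a function $f\in\mathcal{S}_u^*$ with $|a_2a_4-a_3^2|=\frac14$.
   Context: $\mathbb{D}=\{z\in\mathbb{C}:|z|<1\}$. The class $\mathcal{S}_u^*$ consists of all analytic functions $f$ on $\mathbb{D}$ with $f(0)=0$, $f'(0)=1$ (so $f(z)=z+\sum_{n\ge2}a_nz^n$) satisfying $\left|\frac{zf'(z)}{f(z)}-1\right|<1$ for all $z\in\mathbb{D}$. The second Hankel determinant is $H_{2,2}(f)=a_2a_4-a_3^2$. *)

theory Defs
  imports "HOL-Complex_Analysis.Complex_Analysis"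
begin

definition coeff_at0 :: "(complex \<Rightarrow> complex) \<Rightarrow> nat \<Rightarrow> complex" where
  "coeff_at0 f n = (deriv ^^ n) f 0 / of_nat (fact n)"

text \<open>The class S_u^*. At z = 0 the quotient z f'(z)/f(z) is understood by its
  removable value 1, so the condition is imposed for z \<noteq> 0 only.\<close>
definition Su_star :: "(complex \<Rightarrow> complex) set" where
  "Su_star = {f. f holomorphic_on ball 0 1 \<and> f 0 = 0 \<and> deriv f 0 = 1 \<and>
     (\<forall>z\<in>ball 0 1. z \<noteq> 0 \<longrightarrow> f z \<noteq> 0 \<and> cmod (z * deriv f z / f z - 1) < 1)}"

definition H22 :: "(complex \<Rightarrow> complex) \<Rightarrow> complex" where
  "H22 f = coeff_at0 f 2 * coeff_at0 f 4 - (coeff_at0 f 3)^2"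

end

theory Submission
  imports Defs
begin

text \<open>
  Write z f'(z) / f(z) = 1 + w(z). Then w maps the unit disc into itself and w(0) = 0, and
  comparing Taylor coefficients in z f' = f (1 + w) expresses a_2, a_3, a_4 through the
  coefficients c_1, c_2, c_3 of w:  H_{2,2}(f) = c_1 c_3 / 3 - c_1^4 / 12 - c_2^2 / 4.
  Parseval's inequality for the bounded function w gives |c_1|^2 + |c_2|^2 + |c_3|^2 <= 1,
  which bounds this expression by 1/4; the function z exp(z^2/2), with w(z) = z^2, attains it.

  Parseval's inequality is derived from its discrete form: sampling the Taylor polynomial of
  degree < K at the K-th roots of unity on the circle of radius rho gives the exact identity,
  Cauchy's estimates make the truncation error vanish as K tends to infinity, and finally
  rho tends to 1.
\<close>

lemma sum_powers_root_unity:
  fixes j K :: nat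
  assumes "K > 0"
  shows "(\<Sum>k<K. exp (2 * pi * \<i> * j / K) ^ k) = (if K dvd j then of_nat K else 0)"
proof -
  define u where "u = exp (2 * pi * \<i> * j / K)"
  have "u ^ K = 1"
    using complex_root_unity[of K j] assms by (simp add: u_def mult_ac)
  moreover have "u = 1 \<longleftrightarrow> K dvd j"
    using complex_root_unity_eq_1[of K j] assms by (simp add: u_def mult_ac)
  ultimately show ?thesis
    unfolding u_def[symmetric] by (cases "K dvd j") (simp_all add: sum_gp_strict)
qed

lemma sum_powers_root_unity_orthogonal:
  assumes K: "K > 0" and "n < K" "m < K"
  defines "\<zeta> \<equiv> exp (2 * pi * \<i> / K)"
  shows "(\<Sum>k<K. (\<zeta> ^ n * cnj \<zeta> ^ m) ^ k) = (if n = m then of_nat K else 0)"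
proof -
  have \<zeta>_power: "\<zeta> ^ j = exp (2 * pi * \<i> * j / K)" for j :: nat
    by (simp add: \<zeta>_def flip: exp_of_nat_mult) (simp add: field_simps)
  have "\<zeta> ^ K = 1" "\<zeta> * cnj \<zeta> = 1"
    using \<zeta>_power[of K] K by (simp_all add: \<zeta>_def exp_cnj flip: exp_add)
  have "\<zeta> ^ n * cnj \<zeta> ^ m = \<zeta> ^ (n + K - m + m) * cnj \<zeta> ^ m"
    using \<open>\<zeta> ^ K = 1\<close> \<open>m < K\<close> by (simp add: power_add)
  also have "\<dots> = \<zeta> ^ (n + K - m) * (\<zeta> * cnj \<zeta>) ^ m"
    by (simp only: power_add power_mult_distrib mult.assoc)
  finally have rotate: "\<zeta> ^ n * cnj \<zeta> ^ m = \<zeta> ^ (n + K - m)"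
    using \<open>\<zeta> * cnj \<zeta> = 1\<close> by simp
  have "K dvd n + K - m \<longleftrightarrow> n = m"
  proof (cases "m \<le> n")
    case True
    have "\<not> K dvd n - m" if "m \<noteq> n"
      using nat_dvd_not_less[of "n - m" K] \<open>n < K\<close> True that by auto
    moreover have "n + K - m = K + (n - m)"
      using True by simp
    ultimately show ?thesis
      by (auto simp: dvd_add_right_iff)
  next
    case False
    then show ?thesis
      using nat_dvd_not_less[of "n + K - m" K] \<open>m < K\<close> by auto
  qed
  then show ?thesis
    unfolding rotate unfolding \<zeta>_power sum_powers_root_unity[OF K] by simp
qed

lemma sum_norm_square_at_roots_unity:
  fixes d :: "nat \<Rightarrow> complex"
  assumes K: "K > 0"
  shows "(\<Sum>k<K. (cmod (\<Sum>n<K. d n * exp (2 * pi * \<i> / K) ^ (k * n)))^2)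
           = K * (\<Sum>n<K. (cmod (d n))^2)"
proof -
  define \<zeta> where "\<zeta> = exp (2 * pi * \<i> / K)"
  have "complex_of_real (\<Sum>k<K. (cmod (\<Sum>n<K. d n * \<zeta> ^ (k * n)))^2)
      = (\<Sum>k<K. \<Sum>n<K. \<Sum>m<K. d n * cnj (d m) * (\<zeta> ^ n * cnj \<zeta> ^ m) ^ k)"
    unfolding of_real_sum complex_norm_square cnj_sum sum_product
    by (intro sum.cong refl) (simp add: power_mult_distrib mult_ac flip: power_mult)
  also have "\<dots> = (\<Sum>n<K. \<Sum>m<K. d n * cnj (d m) * (\<Sum>k<K. (\<zeta> ^ n * cnj \<zeta> ^ m) ^ k))"
    unfolding sum_distrib_left by (subst sum.swap) (rule sum.cong[OF refl], rule sum.swap)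
  also have "\<dots> = (\<Sum>n<K. d n * cnj (d n) * of_nat K)"
    by (simp add: sum_powers_root_unity_orthogonal[OF K, folded \<zeta>_def] if_distrib sum.delta
        cong: if_cong)
  also have "\<dots> = complex_of_real (K * (\<Sum>n<K. (cmod (d n))^2))"
    unfolding of_real_mult of_real_sum complex_norm_square of_real_of_nat_eq sum_distrib_left
    by (simp add: mult_ac)
  finally show ?thesis
    unfolding \<zeta>_def of_real_eq_iff .
qed

lemma norm_coeff_at0_le:
  assumes hol: "w holomorphic_on ball 0 1" and bd: "\<forall>z\<in>ball 0 1. cmod (w z) \<le> 1"
    and r: "0 < r" "r < 1"
  shows "cmod (coeff_at0 w n) \<le> 1 / r ^ n"
proof -
  have "cmod ((deriv ^^ n) w 0) \<le> fact n * 1 / r ^ n"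
  proof (rule Cauchy_inequality)
    have "w holomorphic_on cball 0 r"
      using r by (auto intro: holomorphic_on_subset[OF hol])
    then show "w holomorphic_on ball 0 r" "continuous_on (cball 0 r) w"
      by (auto intro: holomorphic_on_subset holomorphic_on_imp_continuous_on)
    show "cmod (w x) \<le> 1" if "cmod (0 - x) = r" for x
      using bd that r by simp
  qed (use r in simp)
  then show ?thesis
    by (simp add: coeff_at0_def norm_divide field_simps)
qed

lemma norm_power_series_tail_le:
  assumes hol: "w holomorphic_on ball 0 1" and bd: "\<forall>z\<in>ball 0 1. cmod (w z) \<le> 1"
    and z: "cmod z < r" "r < 1"
  shows "cmod (w z - (\<Sum>n<K. coeff_at0 w n * z ^ n)) \<le> (cmod z / r) ^ K / (1 - cmod z / r)"
proof -
  define q where "q = cmod z / r"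
  have r: "0 < r" using z norm_ge_zero[of z] by linarith
  have q: "0 \<le> q" "q < 1" using z r by (simp_all add: q_def)
  have "(\<lambda>n. coeff_at0 w n * z ^ n) sums w z"
    using holomorphic_power_series[OF hol] z by (simp add: coeff_at0_def)
  then have "(\<lambda>i. coeff_at0 w (i + K) * z ^ (i + K)) sums (w z - (\<Sum>n<K. coeff_at0 w n * z ^ n))"
    by (rule sums_split_initial_segment)
  moreover have "(\<lambda>i. q ^ K * q ^ i) sums (q ^ K / (1 - q))"
    using sums_mult[OF geometric_sums[of q], of "q ^ K"] q by simp
  moreover have "cmod (coeff_at0 w (i + K) * z ^ (i + K)) \<le> q ^ K * q ^ i" for i
  proof -
    have "cmod (coeff_at0 w (i + K) * z ^ (i + K)) \<le> 1 / r ^ (i + K) * cmod z ^ (i + K)"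
      unfolding norm_mult norm_power
      by (intro mult_right_mono norm_coeff_at0_le[OF hol bd r z(2)]) simp
    then show ?thesis
      by (simp add: q_def power_add power_divide mult_ac)
  qed
  ultimately show ?thesis
    unfolding q_def by (rule norm_sums_le)
qed

lemma sum_norm_coeff_at0_square_weighted_le:
  assumes hol: "w holomorphic_on ball 0 1" and bd: "\<forall>z\<in>ball 0 1. cmod (w z) \<le> 1"
    and \<rho>: "0 \<le> \<rho>" "\<rho> < r" "r < 1" and K: "K > 0"
  shows "(\<Sum>n<K. (cmod (coeff_at0 w n))^2 * \<rho>^(2*n)) \<le> (1 + (\<rho> / r)^K / (1 - \<rho> / r))^2"
proof -
  define B where "B = 1 + (\<rho> / r)^K / (1 - \<rho> / r)"
  define \<zeta> where "\<zeta> = exp (2 * pi * \<i> / K)"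
  have "cmod \<zeta> = 1"
    by (simp add: \<zeta>_def norm_exp_eq_Re)
  have "cmod (\<Sum>n<K. (coeff_at0 w n * \<rho>^n) * \<zeta> ^ (k * n)) \<le> B" for k
  proof -
    define z where "z = \<rho> * \<zeta> ^ k"
    have z: "cmod z = \<rho>"
      using \<open>cmod \<zeta> = 1\<close> \<rho> by (simp add: z_def norm_mult norm_power)
    have "cmod (\<Sum>n<K. coeff_at0 w n * z ^ n)
        \<le> cmod (w z) + cmod (w z - (\<Sum>n<K. coeff_at0 w n * z ^ n))"
      by (metis norm_triangle_sub norm_minus_commute)
    also have "\<dots> \<le> B"
      using bd norm_power_series_tail_le[OF hol bd, of z r K] z \<rho> by (simp add: B_def add_mono)
    also have "(\<Sum>n<K. coeff_at0 w n * z ^ n) = (\<Sum>n<K. (coeff_at0 w n * \<rho>^n) * \<zeta> ^ (k * n))"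
      by (simp add: z_def power_mult_distrib mult_ac flip: power_mult)
    finally show ?thesis .
  qed
  then have "(\<Sum>k<K. (cmod (\<Sum>n<K. (coeff_at0 w n * \<rho>^n) * \<zeta> ^ (k * n)))^2) \<le> K * B^2"
    using sum_mono[of "{..<K}" _ "\<lambda>_. B^2"] by (simp add: power_mono)
  then have "K * (\<Sum>n<K. (cmod (coeff_at0 w n * \<rho>^n))^2) \<le> K * B^2"
    unfolding \<zeta>_def sum_norm_square_at_roots_unity[OF K] .
  then show ?thesis
    using K \<rho> by (simp add: B_def norm_mult norm_power power_mult_distrib power_even_eq)
qed

lemma sum_norm_coeff_at0_square_le:
  assumes hol: "w holomorphic_on ball 0 1" and bd: "\<forall>z\<in>ball 0 1. cmod (w z) \<le> 1"
  shows "(\<Sum>n<N. (cmod (coeff_at0 w n))^2) \<le> 1"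
proof -
  define a where "a n = (cmod (coeff_at0 w n))^2" for n
  have on_circle: "(\<Sum>n<N. a n * \<rho>^(2*n)) \<le> 1" if \<rho>: "0 < \<rho>" "\<rho> < 1" for \<rho>
  proof -
    define r where "r = (1 + \<rho>) / 2"
    define q where "q = \<rho> / r"
    have r: "\<rho> < r" "r < 1" and q: "0 < q" "q < 1"
      using \<rho> by (simp_all add: r_def q_def field_simps)
    have "(\<lambda>K. (1 + q^K / (1 - q))^2) \<longlonglongrightarrow> (1 + 0 / (1 - q))^2"
      using q by (intro tendsto_intros LIMSEQ_power_zero) auto
    then have "(\<lambda>K. (1 + q^K / (1 - q))^2) \<longlonglongrightarrow> 1"
      by simp
    moreover have "(\<Sum>n<N. a n * \<rho>^(2*n)) \<le> (1 + q^K / (1 - q))^2" if "K \<ge> max N 1" for K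
    proof -
      have "(\<Sum>n<N. a n * \<rho>^(2*n)) \<le> (\<Sum>n<K. a n * \<rho>^(2*n))"
        using that \<rho> by (intro sum_mono2) (auto simp: a_def)
      also have "\<dots> \<le> (1 + q^K / (1 - q))^2"
        unfolding a_def q_def
        using sum_norm_coeff_at0_square_weighted_le[OF hol bd _ r] \<rho> that by simp
      finally show ?thesis .
    qed
    ultimately show ?thesis
      using LIMSEQ_le_const by blast
  qed
  have "((\<lambda>\<rho>. \<Sum>n<N. a n * \<rho>^(2*n)) \<longlongrightarrow> (\<Sum>n<N. a n * 1^(2*n))) (at_left 1)"
    by (intro tendsto_intros)
  moreover have "eventually (\<lambda>\<rho>. (\<Sum>n<N. a n * \<rho>^(2*n)) \<le> 1) (at_left (1::real))"
    by (rule eventually_mono[OF eventually_at_left_real[of 0]]) (auto intro: on_circle)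
  ultimately have "(\<Sum>n<N. a n) \<le> 1"
    by (intro tendsto_upperbound) (auto simp: trivial_limit_at_left_real)
  then show ?thesis
    by (simp add: a_def)
qed

lemma coeff_at0_cong:
  assumes "eventually (\<lambda>z. f z = g z) (nhds 0)"
  shows "coeff_at0 f n = coeff_at0 g n"
  using higher_deriv_cong_ev[OF assms refl] by (simp add: coeff_at0_def)

lemma coeff_at0_const: "coeff_at0 (\<lambda>_. c) n = (if n = 0 then c else 0)"
  by (simp add: coeff_at0_def)

lemma coeff_at0_power: "coeff_at0 (\<lambda>z. z ^ k) n = (if n = k then 1 else 0)"
proof -
  have "(deriv ^^ n) (\<lambda>z. z ^ k) 0 = pochhammer (of_nat (Suc k - n)) n * 0 ^ (k - n)"
    using higher_deriv_power[of n 0 k 0] by simp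
  also have "\<dots> = (if n = k then fact k else 0)"
    by (auto simp: pochhammer_fact pochhammer_0_left)
  finally have higher_deriv: "(deriv ^^ n) (\<lambda>z. z ^ k) 0 = (if n = k then fact k else 0)" .
  show ?thesis
    unfolding coeff_at0_def higher_deriv by simp
qed

lemma coeff_at0_ident: "coeff_at0 (\<lambda>z. z) n = of_bool (n = 1)"
  by (simp add: coeff_at0_def)

lemma coeff_at0_add:
  assumes "f holomorphic_on S" "g holomorphic_on S" "open S" "0 \<in> S"
  shows "coeff_at0 (\<lambda>z. f z + g z) n = coeff_at0 f n + coeff_at0 g n"
  using higher_deriv_add[OF assms] by (simp add: coeff_at0_def add_divide_distrib)

lemma coeff_at0_mult:
  assumes "f holomorphic_on S" "g holomorphic_on S" "open S" "0 \<in> S"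
  shows "coeff_at0 (\<lambda>z. f z * g z) n = (\<Sum>i\<le>n. coeff_at0 f i * coeff_at0 g (n - i))"
proof -
  have "coeff_at0 (\<lambda>z. f z * g z) n
      = (\<Sum>i\<le>n. of_nat (n choose i) * (deriv ^^ i) f 0 * (deriv ^^ (n - i)) g 0 / of_nat (fact n))"
    unfolding coeff_at0_def higher_deriv_mult[OF assms] atLeast0AtMost sum_divide_distrib ..
  also have "\<dots> = (\<Sum>i\<le>n. coeff_at0 f i * coeff_at0 g (n - i))"
    by (intro sum.cong refl) (simp add: coeff_at0_def binomial_fact)
  finally show ?thesis .
qed

lemma coeff_at0_deriv: "coeff_at0 (deriv f) n = of_nat (Suc n) * coeff_at0 f (Suc n)"
proof -
  have "(deriv ^^ n) (deriv f) = (deriv ^^ Suc n) f"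
    by (simp only: funpow_Suc_right comp_def)
  moreover have "of_nat (fact (Suc n)) = of_nat (Suc n) * (of_nat (fact n) :: complex)"
    by (simp only: fact_Suc of_nat_mult of_nat_id)
  ultimately show ?thesis
    unfolding coeff_at0_def by (simp del: of_nat_Suc)
qed

lemma coeff_at0_mult_deriv:
  assumes "f holomorphic_on S" "open S" "0 \<in> S"
  shows "coeff_at0 (\<lambda>z. z * deriv f z) n = of_nat n * coeff_at0 f n"
proof -
  have "coeff_at0 (\<lambda>z. z * deriv f z) n = (\<Sum>i\<le>n. coeff_at0 (\<lambda>z. z) i * coeff_at0 (deriv f) (n - i))"
    by (rule coeff_at0_mult[OF _ holomorphic_deriv[OF assms(1,2)] assms(2,3)]) simp
  also have "\<dots> = (if n = 0 then 0 else coeff_at0 (deriv f) (n - 1))"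
    by (simp add: coeff_at0_ident sum.delta)
  also have "\<dots> = of_nat n * coeff_at0 f n"
    by (cases n) (simp_all add: coeff_at0_deriv del: of_nat_Suc)
  finally show ?thesis .
qed

lemma coeff_at0_recurrence:
  assumes holf: "f holomorphic_on ball 0 1" and holw: "w holomorphic_on ball 0 1"
    and eq: "\<forall>z\<in>ball 0 1. z * deriv f z = f z * (1 + w z)" and w0: "w 0 = 0"
  shows "of_nat n * coeff_at0 f n = coeff_at0 f n + (\<Sum>i<n. coeff_at0 f i * coeff_at0 w (n - i))"
proof -
  have ball: "open (ball (0::complex) 1)" "0 \<in> ball (0::complex) 1"
    by simp_all
  have "eventually (\<lambda>z. z * deriv f z = f z * (1 + w z)) (nhds 0)"
    using eventually_nhds_in_open[OF ball] by eventually_elim (use eq in auto)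
  then have "of_nat n * coeff_at0 f n = coeff_at0 (\<lambda>z. f z * (1 + w z)) n"
    using coeff_at0_cong coeff_at0_mult_deriv[OF holf ball] by metis
  also have "\<dots> = (\<Sum>i\<le>n. coeff_at0 f i * (of_bool (n = i) + coeff_at0 w (n - i)))"
    using holw ball
    by (simp add: coeff_at0_mult[OF holf _ ball] coeff_at0_add[OF _ holw ball] coeff_at0_const
        holomorphic_intros of_bool_def)
  also have "\<dots> = coeff_at0 f n + (\<Sum>i<n. coeff_at0 f i * coeff_at0 w (n - i))"
    using w0 by (simp add: distrib_left sum.distrib lessThan_Suc_atMost[symmetric] coeff_at0_def)
  finally show ?thesis .
qed

lemma H22_eq_Schwarz_coeffs:
  assumes holf: "f holomorphic_on ball 0 1" and holw: "w holomorphic_on ball 0 1"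
    and eq: "\<forall>z\<in>ball 0 1. z * deriv f z = f z * (1 + w z)"
    and f0: "f 0 = 0" and f1: "deriv f 0 = 1" and w0: "w 0 = 0"
  shows "H22 f = coeff_at0 w 1 * coeff_at0 w 3 / 3 - (coeff_at0 w 1)^4 / 12 - (coeff_at0 w 2)^2 / 4"
proof -
  define a where "a = coeff_at0 f"
  define c where "c = coeff_at0 w"
  have a01: "a 0 = 0" "a 1 = 1"
    using f0 f1 by (simp_all add: a_def coeff_at0_def)
  note rec = coeff_at0_recurrence[OF holf holw eq w0, folded a_def c_def]
  have "2 * a 2 = a 2 + c 1"
    using rec[of 2] a01 by (simp add: numeral_eq_Suc)
  then have a2: "a 2 = c 1"
    by algebra
  have "3 * a 3 = a 3 + a 2 * c 1 + c 2"
    using rec[of 3] a01 by (simp add: numeral_eq_Suc)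
  then have a3: "a 3 = (c 1 ^ 2 + c 2) / 2"
    using a2 by (simp add: field_simps power2_eq_square)
  have "4 * a 4 = a 4 + a 3 * c 1 + a 2 * c 2 + c 3"
    using rec[of 4] a01 by (simp add: numeral_eq_Suc)
  then have a4: "a 4 = (c 1 ^ 3 + 3 * c 1 * c 2 + 2 * c 3) / 6"
    using a2 a3 by (simp add: field_simps power2_eq_square power3_eq_cube)
  show ?thesis
    unfolding H22_def a_def[symmetric] c_def[symmetric] a2 a3 a4
    by (simp add: field_simps power2_eq_square power3_eq_cube power4_eq_xxxx)
qed

lemma Su_star_Schwarz_function:
  assumes "f \<in> Su_star"
  obtains w where "w holomorphic_on ball 0 1" "w 0 = 0" "\<forall>z\<in>ball 0 1. cmod (w z) < 1"
    "\<forall>z\<in>ball 0 1. z * deriv f z = f z * (1 + w z)"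
proof -
  have holf: "f holomorphic_on ball 0 1" and f0: "f 0 = 0" and f1: "deriv f 0 = 1"
    and cond: "\<forall>z\<in>ball 0 1. z \<noteq> 0 \<longrightarrow> f z \<noteq> 0 \<and> cmod (z * deriv f z / f z - 1) < 1"
    using assms by (auto simp: Su_star_def)
  \<comment> \<open>g = f(z)/z makes w = z g'/g = z f'/f - 1 visibly holomorphic at 0\<close>
  define g where "g z = (if z = 0 then deriv f 0 else (f z - f 0) / (z - 0))" for z
  have holg: "g holomorphic_on ball 0 1"
    unfolding g_def[abs_def] by (rule pole_lemma[OF holf]) simp
  have fg: "f z = z * g z" and g0: "g 0 = 1" for z
    using f0 f1 by (simp_all add: g_def)
  have gnz: "g z \<noteq> 0" if "z \<in> ball 0 1" for z
    using cond that fg g0 by (cases "z = 0") auto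
  define w where "w z = z * deriv g z / g z" for z
  have holw: "w holomorphic_on ball 0 1"
    unfolding w_def[abs_def] using gnz by (intro holomorphic_intros holomorphic_deriv holg) auto
  have df: "deriv f z = g z + z * deriv g z" if "z \<in> ball 0 1" for z
  proof -
    have "(g has_field_derivative deriv g z) (at z)"
      using holg that by (auto intro: holomorphic_derivI)
    then have "(f has_field_derivative g z + z * deriv g z) (at z)"
      unfolding fg[abs_def] by (auto intro!: derivative_eq_intros)
    then show ?thesis
      by (rule DERIV_imp_deriv)
  qed
  have w_eq: "z * deriv f z = f z * (1 + w z)" if "z \<in> ball 0 1" for z
    using gnz[OF that] by (simp add: df[OF that] fg w_def field_simps)
  have "cmod (w z) < 1" if "z \<in> ball 0 1" for z
  proof (cases "z = 0")
    case False
    then have "w z = z * deriv f z / f z - 1"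
      using w_eq[OF that] cond that by (auto simp: field_simps)
    then show ?thesis
      using cond that False by auto
  qed (simp add: w_def)
  then show ?thesis
    using that holw w_eq by (auto simp: w_def)
qed

lemma norm_Hankel_expr_le:
  fixes a b c :: complex
  assumes "(cmod a)^2 + (cmod b)^2 + (cmod c)^2 \<le> 1"
  shows "cmod (a * c / 3 - a^4 / 12 - b^2 / 4) \<le> 1/4"
proof -
  have "cmod (a * c / 3 - a^4 / 12 - b^2 / 4) \<le> cmod a * cmod c / 3 + (cmod a)^4 / 12 + (cmod b)^2 / 4"
    using norm_triangle_ineq4[of "a * c / 3 - a^4 / 12" "b^2 / 4"]
      norm_triangle_ineq4[of "a * c / 3" "a^4 / 12"]
    by (simp add: norm_mult norm_divide norm_power)
  also have "\<dots> \<le> ((cmod a)^2 + (cmod b)^2 + (cmod c)^2) / 4"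
  proof -
    have "(cmod a)^2 \<le> 1"
      using assms zero_le_power2[of "cmod b"] zero_le_power2[of "cmod c"] by linarith
    then have "(cmod a)^2 * (cmod a)^2 \<le> (cmod a)^2 * 1"
      by (intro mult_left_mono) simp_all
    then have "(cmod a)^4 \<le> (cmod a)^2"
      by (simp add: power2_eq_square power4_eq_xxxx mult.assoc)
    moreover have "cmod a * cmod c \<le> ((cmod a)^2 + (cmod c)^2) / 2"
      using sum_squares_bound[of "cmod a" "cmod c"] by simp
    moreover have "0 \<le> (cmod c)^2" by simp
    ultimately show ?thesis by argo
  qed
  also have "\<dots> \<le> 1/4"
    using assms by simp
  finally show ?thesis .
qed

lemma deriv_extremal: "deriv (\<lambda>z. z * exp (z^2 / 2)) z = exp (z^2 / 2) * (1 + z^2)"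
proof -
  have "((\<lambda>z. z * exp (z^2 / 2)) has_field_derivative exp (z^2 / 2) * (1 + z^2)) (at z)"
    by (auto intro!: derivative_eq_intros simp: algebra_simps power2_eq_square)
  then show ?thesis
    by (rule DERIV_imp_deriv)
qed

lemma extremal_in_Su_star: "(\<lambda>z. z * exp (z^2 / 2)) \<in> Su_star"
proof -
  have "z * deriv (\<lambda>z. z * exp (z^2 / 2)) z / (z * exp (z^2 / 2)) - 1 = z^2" if "z \<noteq> 0" for z
    using that by (simp add: deriv_extremal field_simps)
  then show ?thesis
    unfolding Su_star_def
    by (auto intro!: holomorphic_intros simp: deriv_extremal norm_power abs_square_less_1)
qed

lemma norm_H22_extremal: "cmod (H22 (\<lambda>z. z * exp (z^2 / 2))) = 1/4"
proof -
  have "H22 (\<lambda>z. z * exp (z^2 / 2))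
      = coeff_at0 (\<lambda>z. z^2) 1 * coeff_at0 (\<lambda>z. z^2) 3 / 3 - (coeff_at0 (\<lambda>z. z^2) 1)^4 / 12
        - (coeff_at0 (\<lambda>z. z^2) 2)^2 / 4"
    by (rule H22_eq_Schwarz_coeffs)
      (auto intro!: holomorphic_intros simp: deriv_extremal algebra_simps)
  then show ?thesis
    by (simp add: coeff_at0_power)
qed

theorem mainTheorem1:
  shows "(\<forall>f\<in>Su_star. cmod (H22 f) \<le> 1/4) \<and> (\<exists>f\<in>Su_star. cmod (H22 f) = 1/4)"
proof (intro conjI ballI bexI)
  fix f assume f: "f \<in> Su_star"
  then have holf: "f holomorphic_on ball 0 1" and "f 0 = 0" "deriv f 0 = 1"
    by (auto simp: Su_star_def)
  obtain w where holw: "w holomorphic_on ball 0 1" and "w 0 = 0"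
    and bd: "\<forall>z\<in>ball 0 1. cmod (w z) < 1" and eq: "\<forall>z\<in>ball 0 1. z * deriv f z = f z * (1 + w z)"
    using Su_star_Schwarz_function[OF f] by blast
  have "(\<Sum>n<4. (cmod (coeff_at0 w n))^2) \<le> 1"
    using sum_norm_coeff_at0_square_le[OF holw] bd by (simp add: less_imp_le)
  then have "(cmod (coeff_at0 w 1))^2 + (cmod (coeff_at0 w 2))^2 + (cmod (coeff_at0 w 3))^2 \<le> 1"
    using \<open>w 0 = 0\<close> by (simp add: numeral_eq_Suc coeff_at0_def)
  then show "cmod (H22 f) \<le> 1/4"
    unfolding H22_eq_Schwarz_coeffs[OF holf holw eq \<open>f 0 = 0\<close> \<open>deriv f 0 = 1\<close> \<open>w 0 = 0\<close>]
    by (rule norm_Hankel_expr_le)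
qed (fact norm_H22_extremal extremal_in_Su_star)+

end
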